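(* Let $\mathrm{2RR}=\textsc{RoundRobin}(\mathrm{ALG}_{\mathrm{fail}},\mathrm{ALG}_{\mathrm{succ}};1,1)$ be run on an SSC instance $I$. Then for every realization $x$ and every $h\in\{\mathrm{fail},\mathrm{succ}\}$, $$\sum_{\tau=1}^{\tau_1}\mathrm{cost}^{\mathrm{2RR}}_\tau(\mathrm{ALG}_h,I)\le 2\,\mathrm{cost}(\mathrm{OPT},I).$$
   Context: An instance $I$ of Stochastic Score Classification (SSC) consists of tests $N=\{1,\dots,n\}$, costs $c_j\ge 0$, success probabilities $p_j\in(0,1)$, and integers $0=t_1<t_2<\dots<t_B<t_{B+1}=n+1$. The outcome vector $x\in\{0,1\}^N$ has independent coordinates with $\Pr[x_j=1]=p_j$ (test $j$ succeeds iff $x_j=1$, otherwise it fails). The score $f(x)$ is the unique $i\in\{1,\dots,B\}$ with $t_i\le\|x\|_1\le t_{i+1}-1$. A (possibly adaptive) strategy conducts tests one at a time, each at most once, the choice of the next test possibly depending on outcomes observed so far, and stops as soon as $f(x)$ is determined (i.e., all $x'\in\{0,1\}^N$ agreeing with $x$ on the conducted tests have $f(x')=f(x)$). $\mathrm{cost}(S,I)$ is the random total cost of the tests conducted by strategy $S$ on $I$. $\mathrm{OPT}$ is a fixed strategy minimizing $\mathbb{E}[\mathrm{cost}(S,I)]$ over all adaptive strategies $S$. Let $\sigma_{\mathrm{fail}},\sigma_{\mathrm{succ}}$ be permutations of $N$ (ties broken arbitrarily) such that $c_{\sigma_{\mathrm{fail}}(1)}/(1-p_{\sigma_{\mathrm{fail}}(1)})\le\dots\le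 c_{\sigma_{\mathrm{fail}}(n)}/(1-p_{\sigma_{\mathrm{fail}}(n)})$ and $c_{\sigma_{\mathrm{succ}}(1)}/p_{\sigma_{\mathrm{succ}}(1)}\le\dots\le c_{\sigma_{\mathrm{succ}}(n)}/p_{\sigma_{\mathrm{succ}}(n)}$; $\mathrm{ALG}_{\mathrm{fail}},\mathrm{ALG}_{\mathrm{succ}}$ denote these orders of tests. $\textsc{RoundRobin}(\mathrm{ALG}_1,\dots,\mathrm{ALG}_k;\alpha_1,\dots,\alpha_k)$, for fixed orders $\mathrm{ALG}_h$ of $N$ and weights $\alpha_h>0$: initialize $C_h=0$ for all $h$; while $f(x)$ is not determined, for each $h$ let $\delta_h$ be the cost of the first test in the order $\mathrm{ALG}_h$ that has not yet been conducted by the scheme, choose $h^\star\in\arg\min_h (C_h+\delta_h)/\alpha_h$ (ties arbitrary), conduct that test of $\mathrm{ALG}_{h^\star}$, and set $C_{h^\star}\leftarrow C_{h^\star}+\delta_{h^\star}$. Each loop iteration is a step; $\mathrm{cost}^{\mathrm{2RR}}_\tau(\mathrm{ALG}_h,I)$ equals the cost of the test conducted in step $\tau$ if $h=h^\star$ in that step, and $0$ otherwise. For a realization $x$ with $i=f(x)$, $\tau_1$ is the smallest integer $\tau\ge 0$ such that among the tests conducted by $\mathrm{2RR}$ in steps $1,\dots,\tau$ at least $t_i$ succeeded or at least $n+1-t_{i+1}$ failed. *)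

theory Defs
  imports Complex_Main
begin

(* Tests are N = {..<n} (0-based).  A realization x is represented by the set
   A \<subseteq> N of succeeding tests (x_j = 1 iff j \<in> A).
   Thresholds t :: nat \<Rightarrow> nat are used at indices 1..B+1. *)

definition score :: "(nat \<Rightarrow> nat) \<Rightarrow> nat \<Rightarrow> nat set \<Rightarrow> nat" where
  "score t B A = (THE i. 1 \<le> i \<and> i \<le> B \<and> t i \<le> card A \<and> card A \<le> t (Suc i) - 1)"

definition determined :: "nat \<Rightarrow> (nat \<Rightarrow> nat) \<Rightarrow> nat \<Rightarrow> nat set \<Rightarrow> nat set \<Rightarrow> bool" where
  "determined n t B S A =
     (\<forall>A'. A' \<subseteq> {..<n} \<longrightarrow> A' \<inter> S = A \<inter> S \<longrightarrow> score t B A' = score t B A)"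

(* adaptive strategy: next test as a function of the observed history *)
type_synonym strategy = "(nat \<times> bool) list \<Rightarrow> nat"

fun srun :: "nat \<Rightarrow> (nat \<Rightarrow> nat) \<Rightarrow> nat \<Rightarrow> strategy \<Rightarrow> nat set \<Rightarrow> nat \<Rightarrow> (nat \<times> bool) list" where
  "srun n t B S A 0 = []"
| "srun n t B S A (Suc k) =
     (let h = srun n t B S A k in
      if determined n t B (fst ` set h) A then h else h @ [(S h, S h \<in> A)])"

definition valid_strategy :: "nat \<Rightarrow> (nat \<Rightarrow> nat) \<Rightarrow> nat \<Rightarrow> strategy \<Rightarrow> bool" where
  "valid_strategy n t B S =
     (\<forall>A k. A \<subseteq> {..<n} \<longrightarrow>
        (let h = srun n t B S A k in
         \<not> determined n t B (fst ` set h) A \<longrightarrow> S h \<in> {..<n} \<and> S h \<notin> fst ` set h))"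

(* cost(S,I) on realization A: the run stops after at most n tests *)
definition strat_cost :: "nat \<Rightarrow> (nat \<Rightarrow> real) \<Rightarrow> (nat \<Rightarrow> nat) \<Rightarrow> nat \<Rightarrow> strategy \<Rightarrow> nat set \<Rightarrow> real" where
  "strat_cost n c t B S A = sum_list (map (\<lambda>(j, _). c j) (srun n t B S A n))"

definition real_prob :: "nat \<Rightarrow> (nat \<Rightarrow> real) \<Rightarrow> nat set \<Rightarrow> real" where
  "real_prob n p A = (\<Prod>j\<in>A. p j) * (\<Prod>j\<in>{..<n} - A. 1 - p j)"

definition exp_cost :: "nat \<Rightarrow> (nat \<Rightarrow> real) \<Rightarrow> (nat \<Rightarrow> real) \<Rightarrow> (nat \<Rightarrow> nat) \<Rightarrow> nat \<Rightarrow> strategy \<Rightarrow> real" where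
  "exp_cost n c p t B S = (\<Sum>A\<in>Pow {..<n}. real_prob n p A * strat_cost n c t B S A)"

definition is_OPT :: "nat \<Rightarrow> (nat \<Rightarrow> real) \<Rightarrow> (nat \<Rightarrow> real) \<Rightarrow> (nat \<Rightarrow> nat) \<Rightarrow> nat \<Rightarrow> strategy \<Rightarrow> bool" where
  "is_OPT n c p t B S =
     (valid_strategy n t B S \<and>
      (\<forall>S'. valid_strategy n t B S' \<longrightarrow> exp_cost n c p t B S \<le> exp_cost n c p t B S'))"

datatype alg = Fail | Succ

(* history of 2RR: list of (index h* of the step, test conducted) *)
definition rr_C :: "(nat \<Rightarrow> real) \<Rightarrow> alg \<Rightarrow> (alg \<times> nat) list \<Rightarrow> real" where
  "rr_C c h hist = sum_list (map (\<lambda>(h', j). if h' = h then c j else 0) hist)"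

definition rr_next :: "(alg \<Rightarrow> nat list) \<Rightarrow> (alg \<times> nat) list \<Rightarrow> alg \<Rightarrow> nat" where
  "rr_next ord hist h = hd (filter (\<lambda>j. j \<notin> snd ` set hist) (ord h))"

(* tb resolves ties (arbitrary tie-breaking, possibly depending on the history) *)
definition rr_choose :: "(nat \<Rightarrow> real) \<Rightarrow> (alg \<Rightarrow> nat list) \<Rightarrow> ((alg \<times> nat) list \<Rightarrow> alg)
    \<Rightarrow> (alg \<times> nat) list \<Rightarrow> alg" where
  "rr_choose c ord tb hist =
     (let vF = (rr_C c Fail hist + c (rr_next ord hist Fail)) / 1;
          vS = (rr_C c Succ hist + c (rr_next ord hist Succ)) / 1
      in if vF < vS then Fail else if vS < vF then Succ else tb hist)"

fun rr_run :: "nat \<Rightarrow> (nat \<Rightarrow> nat) \<Rightarrow> nat \<Rightarrow> (nat \<Rightarrow> real) \<Rightarrow> (alg \<Rightarrow> nat list)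
    \<Rightarrow> ((alg \<times> nat) list \<Rightarrow> alg) \<Rightarrow> nat set \<Rightarrow> nat \<Rightarrow> (alg \<times> nat) list" where
  "rr_run n t B c ord tb A 0 = []"
| "rr_run n t B c ord tb A (Suc k) =
     (let h = rr_run n t B c ord tb A k in
      if determined n t B (snd ` set h) A then h
      else (let a = rr_choose c ord tb h in h @ [(a, rr_next ord h a)]))"

(* cost^{2RR}_tau(ALG_h, I), steps numbered from 1; the run has at most n steps *)
definition rr_step_cost :: "nat \<Rightarrow> (nat \<Rightarrow> nat) \<Rightarrow> nat \<Rightarrow> (nat \<Rightarrow> real) \<Rightarrow> (alg \<Rightarrow> nat list)
    \<Rightarrow> ((alg \<times> nat) list \<Rightarrow> alg) \<Rightarrow> nat set \<Rightarrow> alg \<Rightarrow> nat \<Rightarrow> real" where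
  "rr_step_cost n t B c ord tb A h \<tau> =
     (let run = rr_run n t B c ord tb A n in
      if 1 \<le> \<tau> \<and> \<tau> \<le> length run \<and> fst (run ! (\<tau> - 1)) = h
      then c (snd (run ! (\<tau> - 1))) else 0)"

definition tau1 :: "nat \<Rightarrow> (nat \<Rightarrow> nat) \<Rightarrow> nat \<Rightarrow> (nat \<Rightarrow> real) \<Rightarrow> (alg \<Rightarrow> nat list)
    \<Rightarrow> ((alg \<times> nat) list \<Rightarrow> alg) \<Rightarrow> nat set \<Rightarrow> nat" where
  "tau1 n t B c ord tb A =
     (LEAST \<tau>. let T = snd ` set (take \<tau> (rr_run n t B c ord tb A n)); i = score t B A in
        card (T \<inter> A) \<ge> t i \<or> card (T - A) \<ge> n + 1 - t (Suc i))"

end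

theory Submission
  imports Defs
begin

text \<open>Whenever 2RR serves an order, that order's counter plus the cost of its next test is the
  smaller of the two candidate values. For any test x not yet conducted the two next costs are at
  most c x / (1 - p x) and c x / p x respectively, and one of these is at most 2 c x; so every step
  raises the larger of the two counters by at most 2 c x, for any untested x. OPT must observe
  t i successes and n + 1 - t (i + 1) failures, whereas before step tau1 2RR has seen fewer
  of each. Hence up to step tau1 2RR conducts no more tests than OPT, and its steps can be
  charged injectively to tests of OPT: a step conducting a test of OPT to that test, any other
  step to a test of OPT that 2RR has not reached by step tau1.\<close>

definition valid_thresholds :: "nat \<Rightarrow> (nat \<Rightarrow> nat) \<Rightarrow> nat \<Rightarrow> bool" where
  "valid_thresholds n t B \<longleftrightarrow> 1 \<le> B \<and> t 1 = 0 \<and> t (B + 1) = n + 1 \<and>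
     (\<forall>i. 1 \<le> i \<and> i \<le> B \<longrightarrow> t i < t (i + 1))"

lemma thresholds_mono:
  fixes t :: "nat \<Rightarrow> 'a::order"
  assumes t_mono: "\<forall>i. 1 \<le> i \<and> i \<le> B \<longrightarrow> t i < t (i + 1)"
    and "1 \<le> i" "i \<le> j" "j \<le> B + 1"
  shows "t i \<le> t j"
  using \<open>i \<le> j\<close> \<open>j \<le> B + 1\<close>
proof (induction j rule: dec_induct)
  case base
  then show ?case by simp
next
  case (step m)
  then have "t m < t (m + 1)" using t_mono \<open>1 \<le> i\<close> by auto
  then show ?case using step by simp
qed

lemma score_eqI:
  assumes t_mono: "\<forall>i. 1 \<le> i \<and> i \<le> B \<longrightarrow> t i < t (i + 1)"
    and i: "1 \<le> i" "i \<le> B" "t i \<le> card A" "card A < t (Suc i)"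
  shows "score t B A = i"
  unfolding score_def
proof (rule the_equality)
  show "1 \<le> i \<and> i \<le> B \<and> t i \<le> card A \<and> card A \<le> t (Suc i) - 1"
    using i by simp
next
  fix j assume j: "1 \<le> j \<and> j \<le> B \<and> t j \<le> card A \<and> card A \<le> t (Suc j) - 1"
  have "t j < t (Suc j)" using j t_mono by auto
  then have "card A < t (Suc j)" using j by linarith
  show "j = i"
  proof (rule ccontr)
    assume "j \<noteq> i"
    then consider "Suc j \<le> i" | "Suc i \<le> j" by linarith
    then show False
    proof cases
      case 1
      then have "t (Suc j) \<le> t i" using thresholds_mono[OF t_mono] i j by simp
      then show False using \<open>card A < t (Suc j)\<close> i by linarith
    next
      case 2
      then have "t (Suc i) \<le> t j" using thresholds_mono[OF t_mono] i j by simp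
      then show False using i j by linarith
    qed
  qed
qed

lemma score_in_band:
  assumes thr: "valid_thresholds n t B" and card: "card A \<le> n"
  shows "1 \<le> score t B A \<and> score t B A \<le> B \<and> t (score t B A) \<le> card A
         \<and> card A < t (Suc (score t B A))"
proof -
  note t_mono = thr[unfolded valid_thresholds_def, THEN conjunct2, THEN conjunct2, THEN conjunct2]
  define I where "I = {i. 1 \<le> i \<and> i \<le> B \<and> t i \<le> card A}"
  define i where "i = Max I"
  have "finite I" unfolding I_def by simp
  moreover have "1 \<in> I" using thr unfolding I_def valid_thresholds_def by simp
  ultimately have "i \<in> I" and i_max: "\<And>j. j \<in> I \<Longrightarrow> j \<le> i"
    unfolding i_def by (auto intro: Max_in Max_ge)
  then have i: "1 \<le> i" "i \<le> B" "t i \<le> card A" unfolding I_def by auto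
  have "card A < t (Suc i)"
  proof (cases "i < B")
    case True
    then have "Suc i \<notin> I" using i_max by fastforce
    then show ?thesis using True unfolding I_def by simp
  next
    case False
    then show ?thesis using i thr card unfolding valid_thresholds_def by simp
  qed
  with i show ?thesis using score_eqI[OF t_mono] by simp
qed

text \<open>Completing the outcomes on S by all successes, respectively all failures, does not
  change the score.\<close>

lemma determined_score_counts:
  assumes thr: "valid_thresholds n t B" and A: "A \<subseteq> {..<n}" and "finite S"
    and det: "determined n t B S A"
  shows "t (score t B A) \<le> card (S \<inter> A) \<and> n + 1 - t (Suc (score t B A)) \<le> card (S - A)"
proof -
  have same_score: "score t B A' = score t B A" if "A' \<subseteq> {..<n}" "A' \<inter> S = A \<inter> S" for A'
    using det that unfolding determined_def by blast
  have band: "t (score t B X) \<le> card X \<and> card X < t (Suc (score t B X))" if "X \<subseteq> {..<n}" for X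
    using score_in_band[OF thr] card_mono[OF finite_lessThan that] by simp
  have "S \<inter> A \<subseteq> {..<n}" "S \<inter> A \<inter> S = A \<inter> S" using A by auto
  then have "t (score t B A) \<le> card (S \<inter> A)" using band same_score by metis
  moreover have "n + 1 - t (Suc (score t B A)) \<le> card (S - A)"
  proof -
    define X where "X = {..<n} - (S - A)"
    have "X \<subseteq> {..<n}" "X \<inter> S = A \<inter> S" using A unfolding X_def by auto
    then have "card X < t (Suc (score t B A))" using band same_score by metis
    moreover have "card X = n - card ({..<n} \<inter> (S - A))"
      unfolding X_def by (simp add: card_Diff_subset_Int)
    moreover have "card ({..<n} \<inter> (S - A)) \<le> card (S - A)"
      using \<open>finite S\<close> by (intro card_mono) auto
    ultimately show ?thesis by linarith
  qed
  ultimately show ?thesis ..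
qed

lemma determined_if_all_tested: "A \<subseteq> {..<n} \<Longrightarrow> {..<n} \<subseteq> S \<Longrightarrow> determined n t B S A"
  unfolding determined_def
proof (intro allI impI)
  fix A' assume "A \<subseteq> {..<n}" "{..<n} \<subseteq> S" "A' \<subseteq> {..<n}" "A' \<inter> S = A \<inter> S"
  then have "A' = A" by blast
  then show "score t B A' = score t B A" by simp
qed

lemma srun_tested_invariant:
  assumes v: "valid_strategy n t B S" and A: "A \<subseteq> {..<n}"
  shows "fst ` set (srun n t B S A k) \<subseteq> {..<n} \<and>
     (determined n t B (fst ` set (srun n t B S A k)) A \<or> card (fst ` set (srun n t B S A k)) = k)"
proof (induction k)
  case 0
  then show ?case by simp
next
  case (Suc k)
  let ?h = "srun n t B S A k"
  show ?case
  proof (cases "determined n t B (fst ` set ?h) A")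
    case True
    then show ?thesis using Suc by (simp add: Let_def)
  next
    case False
    have "S ?h \<in> {..<n}" "S ?h \<notin> fst ` set ?h"
      using v False A unfolding valid_strategy_def Let_def by blast+
    moreover have "fst ` set (srun n t B S A (Suc k)) = insert (S ?h) (fst ` set ?h)"
      using False by (simp add: Let_def)
    ultimately show ?thesis using Suc False by simp
  qed
qed

lemma srun_determined:
  assumes "valid_strategy n t B S" and A: "A \<subseteq> {..<n}"
  shows "determined n t B (fst ` set (srun n t B S A n)) A"
proof (rule ccontr)
  let ?T = "fst ` set (srun n t B S A n)"
  assume "\<not> determined n t B ?T A"
  then have "?T = {..<n}"
    using srun_tested_invariant[OF assms, of n] by (simp add: card_subset_eq)
  then show False using \<open>\<not> determined n t B ?T A\<close> determined_if_all_tested[OF A] by auto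
qed

lemma sum_fst_set_le_sum_list:
  fixes c :: "'a \<Rightarrow> real"
  assumes "\<forall>j\<in>fst ` set L. 0 \<le> c j"
  shows "sum c (fst ` set L) \<le> sum_list (map (\<lambda>(j, _). c j) L)"
  using assms
proof (induction L)
  case Nil
  then show ?case by simp
next
  case (Cons a L)
  obtain j b where a: "a = (j, b)" by fastforce
  have "sum c (fst ` set (a # L)) \<le> c j + sum c (fst ` set L)"
    using Cons.prems a by (simp add: sum.insert_if)
  also have "\<dots> \<le> c j + sum_list (map (\<lambda>(j, _). c j) L)" using Cons by simp
  finally show ?case using a by simp
qed

lemma card_insert_le_if_parts_less:
  assumes "finite S" "finite T" "card (T \<inter> A) < card (S \<inter> A)" "card (T - A) < card (S - A)"
  shows "card (insert j T) \<le> card S"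
proof -
  have "card (insert j T) \<le> Suc (card T)" by (simp add: card_insert_le_m1)
  also have "card T = card (T \<inter> A) + card (T - A)" using assms(2) by (rule card_Int_Diff)
  also have "card S = card (S \<inter> A) + card (S - A)" using assms(1) by (rule card_Int_Diff)
  ultimately show ?thesis using assms(3,4) by linarith
qed

lemma sym_Diff_not_subset_if_card_less:
  assumes "finite S" "finite T" "card T \<le> card S" "U \<subseteq> T" "finite Q" "card Q < card (U - S)"
  shows "\<not> S - T \<subseteq> Q"
proof
  assume "S - T \<subseteq> Q"
  have "card (U - S) \<le> card (T - S)" using assms(2,4) by (intro card_mono) auto
  also have "\<dots> \<le> card (S - T)" using assms(2,1,3) by (rule card_le_sym_Diff)
  also have "\<dots> \<le> card Q" using \<open>S - T \<subseteq> Q\<close> assms(5) by (rule card_mono[rotated])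
  finally show False using assms(6) by simp
qed

lemma rr_C_Nil [simp]: "rr_C c h [] = 0"
  by (simp add: rr_C_def)

lemma rr_C_snoc [simp]: "rr_C c h (H @ [x]) = rr_C c h H + (if fst x = h then c (snd x) else 0)"
  by (cases x) (simp add: rr_C_def)

lemma sum_rr_step_cost:
  "(\<Sum>\<tau>\<in>{1..m}. rr_step_cost n t B c ord tb A h \<tau>) = rr_C c h (take m (rr_run n t B c ord tb A n))"
proof (induction m)
  case 0
  then show ?case by simp
next
  case (Suc m)
  define L where "L = rr_run n t B c ord tb A n"
  have "rr_step_cost n t B c ord tb A h (Suc m) + rr_C c h (take m L) = rr_C c h (take (Suc m) L)"
    by (cases "m < length L")
      (simp_all add: rr_step_cost_def L_def[symmetric] take_Suc_conv_app_nth)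
  then show ?case using Suc by (simp add: L_def)
qed

lemma rr_choose_value_le:
  "rr_C c (rr_choose c ord tb H) H + c (rr_next ord H (rr_choose c ord tb H))
     \<le> rr_C c g H + c (rr_next ord H g)"
  by (cases g; cases "tb H") (auto simp: rr_choose_def Let_def)

lemma rr_next_untested:
  assumes "x \<in> set (ord g)" "x \<notin> snd ` set H"
  shows "rr_next ord H g \<in> set (ord g) - snd ` set H"
proof -
  let ?fl = "filter (\<lambda>j. j \<notin> snd ` set H) (ord g)"
  have "x \<in> set ?fl" using assms by simp
  then have "?fl \<noteq> []" by (auto simp del: filter_set set_filter)
  then show ?thesis using hd_in_set[of ?fl] unfolding rr_next_def by auto
qed

lemma rr_next_least:
  fixes r :: "nat \<Rightarrow> 'a::linorder"
  assumes sorted: "sorted (map r (ord g))" and x: "x \<in> set (ord g)" "x \<notin> snd ` set H"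
  shows "r (rr_next ord H g) \<le> r x"
proof -
  let ?fl = "filter (\<lambda>j. j \<notin> snd ` set H) (ord g)"
  have "sorted (map r ?fl)" using sorted by (simp add: sorted_filter)
  moreover have "x \<in> set ?fl" using x by simp
  ultimately show ?thesis unfolding rr_next_def by (cases ?fl) auto
qed

lemma min_ratio_le_twice:
  fixes c q :: real
  assumes "0 \<le> c" "0 < q" "q < 1"
  shows "min (c / (1 - q)) (c / q) \<le> 2 * c"
proof (cases "q \<le> 1 / 2")
  case True
  then have "c \<le> 2 * c * (1 - q)" using assms by (simp add: algebra_simps mult_left_le)
  then have "c / (1 - q) \<le> 2 * c" using assms by (simp add: divide_le_eq)
  then show ?thesis by linarith
next
  case False
  then have "c * 1 \<le> c * (2 * q)" using assms by (intro mult_left_mono) auto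
  then have "c / q \<le> 2 * c" using assms by (simp add: divide_le_eq)
  then show ?thesis by linarith
qed

locale round_robin =
  fixes n :: nat and t :: "nat \<Rightarrow> nat" and B :: nat and c :: "nat \<Rightarrow> real"
    and ord :: "alg \<Rightarrow> nat list" and tb :: "(alg \<times> nat) list \<Rightarrow> alg" and A :: "nat set"
  assumes set_ord: "set (ord g) = {..<n}"
    and A_subset: "A \<subseteq> {..<n}"
begin

abbreviation run :: "nat \<Rightarrow> (alg \<times> nat) list" where
  "run k \<equiv> rr_run n t B c ord tb A k"

abbreviation tested :: "nat \<Rightarrow> nat set" where
  "tested k \<equiv> snd ` set (run k)"

abbreviation step :: "(alg \<times> nat) list \<Rightarrow> alg \<times> nat" where
  "step H \<equiv> (rr_choose c ord tb H, rr_next ord H (rr_choose c ord tb H))"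

lemma run_Suc:
  "run (Suc k) = (if determined n t B (tested k) A then run k else run k @ [step (run k)])"
  by (simp add: Let_def)

lemma step_untested:
  assumes "\<not> determined n t B (snd ` set H) A"
  shows "snd (step H) \<in> {..<n} - snd ` set H"
proof -
  obtain x where "x \<in> {..<n}" "x \<notin> snd ` set H"
    using assms determined_if_all_tested[OF A_subset] by blast
  then have "rr_next ord H g \<in> {..<n} - snd ` set H" for g
    using rr_next_untested[of x ord g H] set_ord by simp
  then show ?thesis by simp
qed

lemma tested_invariant: "tested k \<subseteq> {..<n} \<and> (determined n t B (tested k) A \<or> card (tested k) = k)"
proof (induction k)
  case 0
  then show ?case by simp
next
  case (Suc k)
  show ?case
  proof (cases "determined n t B (tested k) A")
    case True
    then show ?thesis using Suc by (simp add: Let_def)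
  next
    case False
    have "snd (step (run k)) \<in> {..<n} - tested k" using step_untested[OF False] .
    moreover have "tested (Suc k) = insert (snd (step (run k))) (tested k)"
      using False by (simp add: Let_def)
    ultimately show ?thesis using Suc False by simp
  qed
qed

lemma run_n_determined: "determined n t B (tested n) A"
proof (rule ccontr)
  assume nd: "\<not> determined n t B (tested n) A"
  then have "tested n = {..<n}" using tested_invariant[of n] by (simp add: card_subset_eq)
  then show False using nd determined_if_all_tested[OF A_subset] by auto
qed

lemma length_run_le: "length (run k) \<le> k"
  by (induction k) (auto simp: Let_def)

lemma determined_if_short_run: "length (run k) < k \<Longrightarrow> determined n t B (tested k) A"
  by (induction k) (auto simp: Let_def split: if_splits)

lemma run_stable:
  assumes "determined n t B (tested k) A" and "k \<le> m"
  shows "run m = run k"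
  using assms(2) by (induction m rule: dec_induct) (use assms(1) in \<open>simp_all add: Let_def\<close>)

lemma run_prefix: "k \<le> m \<Longrightarrow> \<exists>ys. run m = run k @ ys"
proof (induction m rule: dec_induct)
  case base
  then show ?case by simp
next
  case (step m)
  then obtain ys where "run m = run k @ ys" by blast
  then have "run (Suc m) = run k @ ys \<or> run (Suc m) = run k @ (ys @ [step (run m)])"
    using run_Suc[of m] by simp
  then show ?case by blast
qed

lemma take_run: "k \<le> m \<Longrightarrow> take k (run m) = run k"
proof (cases "length (run k) < k")
  case True
  assume "k \<le> m"
  then have "run m = run k" using run_stable determined_if_short_run[OF True] by blast
  then show ?thesis using True by simp
next
  case False
  assume "k \<le> m"
  then obtain ys where "run m = run k @ ys" using run_prefix by blast
  moreover have "length (run k) = k" using False length_run_le[of k] by simp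
  ultimately show ?thesis by simp
qed

lemma tested_mono: "k \<le> m \<Longrightarrow> tested k \<subseteq> tested m"
proof -
  assume "k \<le> m"
  then obtain ys where "run m = run k @ ys" using run_prefix by blast
  then show ?thesis by auto
qed

end

definition rr_Cmax :: "(nat \<Rightarrow> real) \<Rightarrow> (alg \<times> nat) list \<Rightarrow> real" where
  "rr_Cmax c H = max (rr_C c Fail H) (rr_C c Succ H)"

locale round_robin_ratio = round_robin +
  fixes p :: "nat \<Rightarrow> real"
  assumes cost_nonneg: "\<forall>j<n. 0 \<le> c j"
    and prob: "\<forall>j<n. 0 < p j \<and> p j < 1"
    and sorted_fail: "sorted (map (\<lambda>j. c j / (1 - p j)) (ord Fail))"
    and sorted_succ: "sorted (map (\<lambda>j. c j / p j) (ord Succ))"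
begin

lemma next_cost_le_ratio:
  assumes x: "x \<in> {..<n}" "x \<notin> snd ` set H"
  shows "c (rr_next ord H Fail) \<le> c x / (1 - p x)" and "c (rr_next ord H Succ) \<le> c x / p x"
proof -
  have next_in: "rr_next ord H g < n" for g
    using rr_next_untested x set_ord by blast
  have below_ratios: "c j \<le> c j / (1 - p j) \<and> c j \<le> c j / p j" if "j < n" for j
  proof -
    have "0 \<le> c j" "0 < p j" "p j < 1" using that cost_nonneg prob by auto
    then show ?thesis by (simp add: le_divide_eq mult_left_le)
  qed
  have "c (rr_next ord H Fail) / (1 - p (rr_next ord H Fail)) \<le> c x / (1 - p x)"
    using rr_next_least[of "\<lambda>j. c j / (1 - p j)" ord Fail, OF sorted_fail] x set_ord by blast
  then show "c (rr_next ord H Fail) \<le> c x / (1 - p x)"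
    using below_ratios[OF next_in[of Fail]] by linarith
  have "c (rr_next ord H Succ) / p (rr_next ord H Succ) \<le> c x / p x"
    using rr_next_least[of "\<lambda>j. c j / p j" ord Succ, OF sorted_succ] x set_ord by blast
  then show "c (rr_next ord H Succ) \<le> c x / p x"
    using below_ratios[OF next_in[of Succ]] by linarith
qed

lemma rr_Cmax_step_le:
  assumes x: "x \<in> {..<n}" "x \<notin> snd ` set H"
  shows "rr_Cmax c (H @ [step H]) \<le> rr_Cmax c H + 2 * c x"
proof -
  let ?a = "rr_choose c ord tb H"
  have chosen: "rr_C c ?a H + c (rr_next ord H ?a)
      \<le> rr_Cmax c H + min (c x / (1 - p x)) (c x / p x)"
    using rr_choose_value_le[of c ord tb H Fail] rr_choose_value_le[of c ord tb H Succ]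
      next_cost_le_ratio[OF x]
    unfolding rr_Cmax_def by (auto simp: min_def)
  have "min (c x / (1 - p x)) (c x / p x) \<le> 2 * c x"
    using x cost_nonneg prob by (intro min_ratio_le_twice) auto
  moreover have "0 \<le> c x" using x cost_nonneg by simp
  ultimately show ?thesis using chosen unfolding rr_Cmax_def by (cases ?a) auto
qed

lemma rr_Cmax_charge_step:
  assumes "finite S" and S: "S \<subseteq> {..<n}" and card_le: "card (tested m) \<le> card S"
    and "Suc k \<le> m" and not_det: "\<not> determined n t B (tested k) A"
    and Q: "Q \<subseteq> S - tested m" "card Q = card (tested k - S)"
      "rr_Cmax c (run k) \<le> 2 * (sum c (S \<inter> tested k) + sum c Q)"
  shows "\<exists>Q' \<subseteq> S - tested m. card Q' = card (tested (Suc k) - S) \<and>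
           rr_Cmax c (run (Suc k)) \<le> 2 * (sum c (S \<inter> tested (Suc k)) + sum c Q')"
proof -
  have "finite Q" using Q(1) \<open>finite S\<close> by (meson finite_Diff finite_subset)
  define j where "j = snd (step (run k))"
  have run: "run (Suc k) = run k @ [step (run k)]" using not_det by (simp add: Let_def)
  have j: "j \<in> {..<n}" "j \<notin> tested k" using step_untested[OF not_det] unfolding j_def by auto
  have tested_Suc: "tested (Suc k) = insert j (tested k)" using run unfolding j_def by simp
  show ?thesis
  proof (cases "j \<in> S")
    case True
    have "rr_Cmax c (run (Suc k)) \<le> rr_Cmax c (run k) + 2 * c j"
      using rr_Cmax_step_le[OF j] run by simp
    moreover have "sum c (S \<inter> tested (Suc k)) = c j + sum c (S \<inter> tested k)"
      unfolding tested_Suc using True j(2) \<open>finite S\<close> by (simp add: Int_insert_right)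
    ultimately have "rr_Cmax c (run (Suc k)) \<le> 2 * (sum c (S \<inter> tested (Suc k)) + sum c Q)"
      using Q(3) by (simp del: rr_run.simps)
    moreover have "card Q = card (tested (Suc k) - S)"
      using Q(2) tested_Suc True by (simp add: insert_Diff_if)
    ultimately show ?thesis using Q(1) by blast
  next
    case False
    have card_Suc: "card (tested (Suc k) - S) = Suc (card Q)"
      unfolding tested_Suc using False j(2) Q(2) by (simp add: insert_Diff_if)
    have "\<not> S - tested m \<subseteq> Q"
      using sym_Diff_not_subset_if_card_less[OF \<open>finite S\<close> _ card_le tested_mono[OF \<open>Suc k \<le> m\<close>]]
        card_Suc \<open>finite Q\<close> by simp
    then obtain x where x: "x \<in> S - tested m" "x \<notin> Q" by blast
    have "x \<in> {..<n}" "x \<notin> tested k" using x S tested_mono[of k m] \<open>Suc k \<le> m\<close> by auto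
    then have "rr_Cmax c (run (Suc k)) \<le> rr_Cmax c (run k) + 2 * c x"
      using rr_Cmax_step_le run by simp
    moreover have "sum c (insert x Q) = c x + sum c Q" using \<open>finite Q\<close> x(2) by simp
    moreover have "S \<inter> tested (Suc k) = S \<inter> tested k" using tested_Suc False by auto
    ultimately have "rr_Cmax c (run (Suc k)) \<le> 2 * (sum c (S \<inter> tested (Suc k)) + sum c (insert x Q))"
      using Q(3) by (simp del: rr_run.simps)
    moreover have "card (insert x Q) = card (tested (Suc k) - S)"
      using \<open>finite Q\<close> x(2) card_Suc by simp
    moreover have "insert x Q \<subseteq> S - tested m" using Q(1) x(1) by blast
    ultimately show ?thesis by blast
  qed
qed

lemma rr_Cmax_charged:
  assumes "finite S" and "S \<subseteq> {..<n}" and "card (tested m) \<le> card S"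
  shows "k \<le> m \<Longrightarrow> \<exists>Q \<subseteq> S - tested m. card Q = card (tested k - S) \<and>
            rr_Cmax c (run k) \<le> 2 * (sum c (S \<inter> tested k) + sum c Q)"
proof (induction k)
  case 0
  then show ?case by (intro exI[of _ "{}"]) (simp add: rr_Cmax_def)
next
  case (Suc k)
  then obtain Q where Q: "Q \<subseteq> S - tested m" "card Q = card (tested k - S)"
     "rr_Cmax c (run k) \<le> 2 * (sum c (S \<inter> tested k) + sum c Q)" by auto
  show ?case
  proof (cases "determined n t B (tested k) A")
    case True
    then have "run (Suc k) = run k" by (simp add: Let_def)
    then have "card Q = card (tested (Suc k) - S)"
      "rr_Cmax c (run (Suc k)) \<le> 2 * (sum c (S \<inter> tested (Suc k)) + sum c Q)"
      using Q(2,3) by simp_all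
    then show ?thesis using Q(1) by blast
  next
    case False
    then show ?thesis using rr_Cmax_charge_step[OF assms Suc.prems _ Q] by blast
  qed
qed

lemma rr_Cmax_le_twice_sum:
  assumes "finite S" "S \<subseteq> {..<n}" "card (tested m) \<le> card S"
  shows "rr_Cmax c (run m) \<le> 2 * sum c S"
proof -
  obtain Q where Q: "Q \<subseteq> S - tested m" "rr_Cmax c (run m) \<le> 2 * (sum c (S \<inter> tested m) + sum c Q)"
    using rr_Cmax_charged[OF assms] by blast
  have "finite Q" using Q(1) \<open>finite S\<close> by (meson finite_Diff finite_subset)
  then have "sum c (S \<inter> tested m) + sum c Q = sum c ((S \<inter> tested m) \<union> Q)"
    using Q(1) \<open>finite S\<close> by (subst sum.union_disjoint) auto
  also have "\<dots> \<le> sum c S"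
    using Q(1) assms cost_nonneg by (intro sum_mono2) auto
  finally show ?thesis using Q(2) by simp
qed

end

context round_robin
begin

lemma tau1_le_n:
  assumes "valid_thresholds n t B"
  shows "tau1 n t B c ord tb A \<le> n"
  unfolding tau1_def
proof (rule Least_le)
  have "take n (run n) = run n" using length_run_le[of n] by simp
  then show "let T = snd ` set (take n (run n)); i = score t B A
      in t i \<le> card (T \<inter> A) \<or> n + 1 - t (Suc i) \<le> card (T - A)"
    using determined_score_counts[OF assms A_subset _ run_n_determined] by (simp add: Let_def)
qed

lemma card_tested_tau1_le:
  assumes thr: "valid_thresholds n t B" and "finite S"
    and S_succ: "t (score t B A) \<le> card (S \<inter> A)"
    and S_fail: "n + 1 - t (Suc (score t B A)) \<le> card (S - A)"
  shows "card (tested (tau1 n t B c ord tb A)) \<le> card S"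
proof (cases "tau1 n t B c ord tb A")
  case 0
  then show ?thesis by simp
next
  case (Suc k)
  then have "k < tau1 n t B c ord tb A" "k \<le> n" using tau1_le_n[OF thr] by simp_all
  have "take k (run n) = run k" using take_run \<open>k \<le> n\<close> by simp
  then have "\<not> (t (score t B A) \<le> card (tested k \<inter> A) \<or>
      n + 1 - t (Suc (score t B A)) \<le> card (tested k - A))"
    using not_less_Least[OF \<open>k < tau1 n t B c ord tb A\<close>[unfolded tau1_def]] by (simp add: Let_def)
  then have "card (insert (snd (step (run k))) (tested k)) \<le> card S"
    using S_succ S_fail \<open>finite S\<close> by (intro card_insert_le_if_parts_less[where A = A]) auto
  moreover have "card (tested (Suc k)) \<le> card (insert (snd (step (run k))) (tested k))"
    by (rule card_mono) (auto simp: Let_def)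
  ultimately show ?thesis unfolding Suc by (rule order_trans[rotated])
qed

end

theorem lemma5:
  fixes n B :: nat and c p :: "nat \<Rightarrow> real" and t :: "nat \<Rightarrow> nat"
    and sf ss :: "nat list" and tb :: "(alg \<times> nat) list \<Rightarrow> alg"
    and OPT :: strategy and A :: "nat set" and h :: alg
  assumes cost_nonneg: "\<forall>j<n. c j \<ge> 0"
    and prob: "\<forall>j<n. 0 < p j \<and> p j < 1"
    and B: "B \<ge> 1"
    and t_first: "t 1 = 0" and t_last: "t (B + 1) = n + 1"
    and t_mono: "\<forall>i. 1 \<le> i \<and> i \<le> B \<longrightarrow> t i < t (i + 1)"
    and sf: "distinct sf" "set sf = {..<n}" "sorted (map (\<lambda>j. c j / (1 - p j)) sf)"
    and ss: "distinct ss" "set ss = {..<n}" "sorted (map (\<lambda>j. c j / p j) ss)"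
    and opt: "is_OPT n c p t B OPT"
    and A: "A \<subseteq> {..<n}"
  shows "(\<Sum>\<tau>\<in>{1..tau1 n t B c (\<lambda>g. case g of Fail \<Rightarrow> sf | Succ \<Rightarrow> ss) tb A}.
            rr_step_cost n t B c (\<lambda>g. case g of Fail \<Rightarrow> sf | Succ \<Rightarrow> ss) tb A h \<tau>)
         \<le> 2 * strat_cost n c t B OPT A"
proof -
  define ord where "ord = (\<lambda>g. case g of Fail \<Rightarrow> sf | Succ \<Rightarrow> ss)"
  interpret round_robin_ratio n t B c ord tb A p
    by unfold_locales (use cost_nonneg prob sf ss A in \<open>auto simp: ord_def split: alg.split\<close>)
  have thr: "valid_thresholds n t B"
    using B t_first t_last t_mono unfolding valid_thresholds_def by simp
  define \<tau>\<^sub>1 where "\<tau>\<^sub>1 = tau1 n t B c ord tb A"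
  define S where "S = fst ` set (srun n t B OPT A n)"
  have valid: "valid_strategy n t B OPT" using opt unfolding is_OPT_def by simp
  have "finite S" and S_sub: "S \<subseteq> {..<n}"
    using srun_tested_invariant[OF valid A, of n] unfolding S_def by simp_all
  have counts: "t (score t B A) \<le> card (S \<inter> A) \<and> n + 1 - t (Suc (score t B A)) \<le> card (S - A)"
    using determined_score_counts[OF thr A \<open>finite S\<close> srun_determined[OF valid A, folded S_def]] .
  have "card (tested \<tau>\<^sub>1) \<le> card S"
    using card_tested_tau1_le[OF thr \<open>finite S\<close> counts[THEN conjunct1] counts[THEN conjunct2]]
    unfolding \<tau>\<^sub>1_def .
  have "(\<Sum>\<tau>\<in>{1..\<tau>\<^sub>1}. rr_step_cost n t B c ord tb A h \<tau>) = rr_C c h (run \<tau>\<^sub>1)"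
    using sum_rr_step_cost take_run tau1_le_n[OF thr] unfolding \<tau>\<^sub>1_def by simp
  also have "\<dots> \<le> rr_Cmax c (run \<tau>\<^sub>1)" unfolding rr_Cmax_def by (cases h) auto
  also have "\<dots> \<le> 2 * sum c S"
    using rr_Cmax_le_twice_sum[OF \<open>finite S\<close> S_sub \<open>card (tested \<tau>\<^sub>1) \<le> card S\<close>] .
  also have "\<dots> \<le> 2 * strat_cost n c t B OPT A"
    using sum_fst_set_le_sum_list[of "srun n t B OPT A n" c] S_sub cost_nonneg
    unfolding strat_cost_def S_def by auto
  finally show ?thesis unfolding \<tau>\<^sub>1_def ord_def .
qed

end
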